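(* Let $h_1,h_2:(0,\infty)\to\mathbb{R}$ be convex, bounded and decreasing, with $\lim_{x\to0}h_1(x)=\lim_{x\to0}h_2(x)$. Then every connected component $I\ne(0,\infty)$ of $X(h_1,h_2)$ satisfies $I\cap\operatorname{supp}(h_1)\ne\varnothing$, and every connected component $I\ne(0,\infty)$ of $X(h_2,h_1)$ satisfies $I\cap\operatorname{supp}(h_2)\ne\varnothing$.
   Context: $X(h_1,h_2):=\{x>0:h_1(x)<h_2(x)\}$ (an open subset of $(0,\infty)$). $\operatorname{supp}(h):=\{x>0:\text{for every open }U\ni x,\ h|_U\text{ is not affine}\}$. *)

theory Defs
  imports "HOL-Analysis.Analysis"
begin

text \<open>Functions (0,oo) -> R are modelled as total functions real => real;
  only their values on {0<..} matter.\<close>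

definition Xset :: "(real \<Rightarrow> real) \<Rightarrow> (real \<Rightarrow> real) \<Rightarrow> real set" where
  "Xset h1 h2 = {x. x > 0 \<and> h1 x < h2 x}"

definition affine_fun_on :: "real set \<Rightarrow> (real \<Rightarrow> real) \<Rightarrow> bool" where
  "affine_fun_on U h \<longleftrightarrow> (\<exists>a b. \<forall>y\<in>U. h y = a * y + b)"

definition supp :: "(real \<Rightarrow> real) \<Rightarrow> real set" where
  "supp h = {x. x > 0 \<and> (\<forall>U. open U \<and> x \<in> U \<longrightarrow> \<not> affine_fun_on (U \<inter> {0<..}) h)}"

end

theory Submission
  imports Defs
begin

(* If a component I = (a, b) of X(h1, h2) missed supp h1, then h1 would be affine on I, so
   h2 - h1 would be convex on I.  At a finite endpoint a > 0 or b < oo we have h2 <= h1, since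
   the endpoint lies outside the open set X(h1, h2); at a = 0 both functions tend to the same
   limit.  Convexity then gives h2 <= h1 on all of I, contradicting I being part of X(h1, h2).
   If I = (a, oo) with a > 0, the bounded affine function h1 is constant there, and since h2 is
   decreasing, h2 <= h2 a <= h1 a = h1 on I, again a contradiction. *)

lemma open_interval_real_cases:
  fixes C :: "real set"
  assumes "open C" "is_interval C" "C \<noteq> {}" "bdd_below C"
  obtains (Ioi) a where "C = {a<..}" | (Ioo) a b where "a < b" "C = {a<..<b}"
proof -
  have unbdd: "\<not> bdd_below {..<b}" for b :: real
  proof
    assume "bdd_below {..<b}"
    then obtain M where "\<And>x. x < b \<Longrightarrow> M \<le> x" by (auto simp: bdd_below_def)
    from this[of "min M b - 1"] show False by linarith
  qed
  have "interior C = C" using assms(1) by (rule interior_open)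
  moreover obtain a b where "C = {} \<or> C = UNIV \<or> C = {..<b} \<or> C = {..b} \<or> C = {a<..} \<or> C = {a..} \<or>
    C = {a<..<b} \<or> C = {a<..b} \<or> C = {a..<b} \<or> C = {a..b}"
    using is_real_interval[OF assms(2)] by blast
  ultimately show ?thesis
    using assms(3,4) that unbdd[of b] bdd_below_mono[of C "{..<b}"]
    by (auto simp: interior_open) (metis order.strict_trans)
qed

lemma isCont_eq_at_islimpt:
  fixes f g :: "'a::t2_space \<Rightarrow> 'b::t2_space"
  assumes "isCont f p" "isCont g p" "p islimpt T" "\<And>t. t \<in> T \<Longrightarrow> f t = g t"
  shows "f p = g p"
proof -
  have "(f \<longlongrightarrow> f p) (at p within T)" "(g \<longlongrightarrow> g p) (at p within T)"
    using assms(1,2) by (auto simp: isCont_def intro: tendsto_within_subset)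
  moreover have "\<forall>\<^sub>F t in at p within T. f t = g t"
    using assms(4) by (auto simp: eventually_at_filter)
  ultimately have "(f \<longlongrightarrow> g p) (at p within T)"
    using tendsto_cong by blast
  then show ?thesis
    using \<open>(f \<longlongrightarrow> f p) (at p within T)\<close> assms(3) tendsto_unique trivial_limit_within by blast
qed

lemma chord_le_affine:
  fixes a b x u v c d :: real
  assumes "a < b" "x \<in> {a..b}" "u \<le> c * a + d" "v \<le> c * b + d"
  shows "(v - u) / (b - a) * (x - a) + u \<le> c * x + d"
proof -
  define w where "w = (x - a) / (b - a)"
  have w: "0 \<le> w" "w \<le> 1" using assms(1,2) by (auto simp: w_def field_simps)
  have "w * (b - a) = x - a" using assms(1) by (simp add: w_def)
  then have x: "x = (1 - w) * a + w * b" by (simp add: algebra_simps)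
  have "(v - u) / (b - a) * (x - a) + u = (1 - w) * u + w * v"
    by (simp add: w_def algebra_simps add_divide_distrib [symmetric])
  also have "\<dots> \<le> (1 - w) * (c * a + d) + w * (c * b + d)"
    using w assms(3,4) by (intro add_mono mult_left_mono) auto
  also have "\<dots> = c * x + d" unfolding x by (simp add: algebra_simps)
  finally show ?thesis .
qed

lemma convex_on_le_affine_at_right:
  fixes f :: "real \<Rightarrow> real"
  assumes conv: "convex_on {a<..b} f" and lim: "(f \<longlongrightarrow> l) (at_right a)"
    and "l \<le> c * a + d" "f b \<le> c * b + d" and x: "x \<in> {a<..b}"
  shows "f x \<le> c * x + d"
proof -
  define chord where "chord e = (f b - f e) / (b - e) * (x - e) + f e" for e
  have "(chord \<longlongrightarrow> (f b - l) / (b - a) * (x - a) + l) (at_right a)"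
    unfolding chord_def using x by (intro tendsto_intros lim) auto
  moreover have "\<forall>\<^sub>F e in at_right a. f x \<le> chord e"
  proof (rule eventually_mono)
    show "\<forall>\<^sub>F e in at_right a. e \<in> {a<..<x}"
      using x by (intro eventually_at_right_real) auto
  next
    fix e assume "e \<in> {a<..<x}"
    then show "f x \<le> chord e"
      unfolding chord_def using x by (intro convex_onD_Icc' convex_on_subset[OF conv]) auto
  qed
  ultimately have "f x \<le> (f b - l) / (b - a) * (x - a) + l"
    by (rule tendsto_lowerbound) simp
  also have "\<dots> \<le> c * x + d" using x assms(3,4) by (intro chord_le_affine) auto
  finally show ?thesis .
qed

lemma bounded_affine_image_slope_eq_0:
  fixes c d :: real
  assumes "bounded ((\<lambda>t. c * t + d) ` {a<..})"
  shows "c = 0"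
proof (rule ccontr)
  assume "c \<noteq> 0"
  obtain M where M: "\<And>t. t > a \<Longrightarrow> \<bar>c * t + d\<bar> \<le> M"
    using assms by (auto simp: bounded_real)
  have "0 \<le> M" using M[of "a + 1"] by linarith
  define t where "t = \<bar>a\<bar> + (M + \<bar>d\<bar> + 1) / \<bar>c\<bar>"
  have "(M + \<bar>d\<bar> + 1) / \<bar>c\<bar> > 0" using \<open>0 \<le> M\<close> \<open>c \<noteq> 0\<close> by simp
  then have "t > a" "t \<ge> 0" unfolding t_def by linarith+
  have "\<bar>c\<bar> * t = \<bar>c\<bar> * \<bar>a\<bar> + (M + \<bar>d\<bar> + 1)"
    using \<open>c \<noteq> 0\<close> by (simp add: t_def field_simps)
  then have "\<bar>c * t\<bar> \<ge> M + \<bar>d\<bar> + 1"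
    using \<open>t \<ge> 0\<close> by (simp add: abs_mult)
  then show False using M[OF \<open>t > a\<close>] by linarith
qed

lemma affine_fun_on_if_disjoint_supp:
  fixes h :: "real \<Rightarrow> real"
  assumes J: "open J" "connected J" "J \<subseteq> {0<..}" and disj: "J \<inter> supp h = {}"
  shows "affine_fun_on J h"
proof -
  \<comment> \<open>slope and intercept of the local affine pieces form a locally constant function\<close>
  define coeffs where "coeffs y = (deriv h y, h y - deriv h y * y)" for y
  have "\<exists>V. openin (top_of_set J) V \<and> y \<in> V \<and> (\<forall>z\<in>V. coeffs z = coeffs y)" if y: "y \<in> J" for y
  proof -
    have "y \<notin> supp h" "y > 0" using y J disj by auto
    then obtain U where U: "open U" "y \<in> U" "affine_fun_on (U \<inter> {0<..}) h"
      unfolding supp_def by blast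
    then obtain a b where ab: "\<And>t. t \<in> U \<inter> {0<..} \<Longrightarrow> h t = a * t + b"
      unfolding affine_fun_on_def by blast
    define V where "V = U \<inter> J"
    have V: "open V" "V \<subseteq> J" "y \<in> V" using U J y by (auto simp: V_def)
    have "coeffs z = (a, b)" if z: "z \<in> V" for z
    proof -
      have "((\<lambda>t. a * t + b) has_real_derivative a) (at z)"
        by (auto intro!: derivative_eq_intros)
      then have "(h has_real_derivative a) (at z)"
        by (rule has_field_derivative_transform_within_open[OF _ \<open>open V\<close> z])
           (use ab J in \<open>auto simp: V_def\<close>)
      then have "deriv h z = a" by (rule DERIV_imp_deriv)
      moreover have "h z = a * z + b" using ab z J by (auto simp: V_def)
      ultimately show ?thesis by (simp add: coeffs_def)
    qed
    moreover have "openin (top_of_set J) V" using V(1,2) by (rule open_subset[rotated])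
    ultimately show ?thesis using V(3) by metis
  qed
  then have "coeffs constant_on J" by (rule locally_constant_imp_constant[OF J(2)])
  then obtain k where k: "\<And>y. y \<in> J \<Longrightarrow> coeffs y = k" unfolding constant_on_def by blast
  have "h y = fst k * y + snd k" if "y \<in> J" for y
    using k[OF that, symmetric] by (simp add: coeffs_def)
  then show ?thesis unfolding affine_fun_on_def by blast
qed

lemma open_Xset:
  assumes "continuous_on {0<..} h1" "continuous_on {0<..} h2"
  shows "open (Xset h1 h2)"
proof -
  have "Xset h1 h2 = {0<..} \<inter> (\<lambda>t. h2 t - h1 t) -` {0<..}"
    by (auto simp: Xset_def)
  then show ?thesis
    using assms by (auto intro!: continuous_open_preimage continuous_intros)
qed

lemma convex_le_affine_on_interval:
  fixes h1 h2 :: "real \<Rightarrow> real"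
  assumes conv2: "convex_on {0<..} h2" and bdd1: "bounded (h1 ` {0<..})"
    and dec2: "\<forall>x\<in>{0<..}. \<forall>y\<in>{0<..}. x \<le> y \<longrightarrow> h2 y \<le> h2 x"
    and lim1: "(h1 \<longlongrightarrow> L) (at_right 0)" and lim2: "(h2 \<longlongrightarrow> L) (at_right 0)"
    and C: "open C" "is_interval C" "C \<subseteq> {0<..}" "C \<noteq> {0<..}" "x \<in> C"
    and aff: "\<And>t. t \<in> C \<Longrightarrow> h1 t = c * t + d"
    and below: "\<And>p. p \<in> frontier C \<Longrightarrow> p > 0 \<Longrightarrow> h2 p \<le> c * p + d"
  shows "h2 x \<le> c * x + d"
proof -
  have frontier_nonneg: "p \<ge> 0" if "p \<in> frontier C" for p
    using that closure_mono[OF C(3)] by (auto simp: frontier_def)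
  have "C \<noteq> {}" "bdd_below C" using C(3,5) bdd_below_mono[OF bdd_below_Ioi] by auto
  with C(1,2) show ?thesis
  proof (cases rule: open_interval_real_cases)
    case (Ioi a)
    have "a \<noteq> 0" using C(4) by (auto simp: Ioi)
    moreover have "a \<ge> 0" using frontier_nonneg by (simp add: Ioi)
    ultimately have "a > 0" by simp
    have "h1 ` C = (\<lambda>t. c * t + d) ` {a<..}" using aff by (auto simp: Ioi intro: image_cong)
    then have "c = 0"
      using bounded_subset[OF bdd1 image_mono[OF C(3)]] by (auto intro: bounded_affine_image_slope_eq_0)
    have "h2 x \<le> h2 a" using dec2 \<open>a > 0\<close> C(5) by (auto simp: Ioi)
    also have "\<dots> \<le> c * a + d" using below \<open>a > 0\<close> by (simp add: Ioi)
    finally show ?thesis using \<open>c = 0\<close> by simp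
  next
    case (Ioo a b)
    have "frontier C = {a, b}" using \<open>a < b\<close> by (auto simp: Ioo frontier_def interior_open less_imp_le)
    then have "a \<ge> 0" using frontier_nonneg by simp
    then have "h2 b \<le> c * b + d" using below \<open>frontier C = {a, b}\<close> \<open>a < b\<close> by simp
    obtain l where l: "(h2 \<longlongrightarrow> l) (at_right a)" "l \<le> c * a + d"
    proof (cases "a = 0")
      case True
      have "\<forall>\<^sub>F t in at_right 0. h1 t = c * t + d"
        using \<open>a < b\<close> aff eventually_at_right_real[of 0 b] by (auto simp: Ioo True elim: eventually_mono)
      then have "((\<lambda>t. c * t + d) \<longlongrightarrow> L) (at_right 0)"
        using lim1 by (rule Lim_transform_eventually[rotated])
      moreover have "((\<lambda>t. c * t + d) \<longlongrightarrow> d) (at_right 0)"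
        by (auto intro!: tendsto_eq_intros)
      ultimately have "L = d" using tendsto_unique trivial_limit_at_right_real by blast
      with lim2 True show thesis by (intro that[of L]) auto
    next
      case False
      then have "isCont h2 a"
        using convex_on_continuous[OF open_greaterThan conv2] \<open>a \<ge> 0\<close>
        by (simp add: continuous_on_eq_continuous_at)
      then have "(h2 \<longlongrightarrow> h2 a) (at_right a)"
        by (simp add: isCont_def filterlim_at_split)
      with below \<open>frontier C = {a, b}\<close> \<open>a \<ge> 0\<close> False show thesis by (intro that) auto
    qed
    show ?thesis
    proof (rule convex_on_le_affine_at_right[OF _ l])
      show "convex_on {a<..b} h2" by (rule convex_on_subset[OF conv2]) (use \<open>a \<ge> 0\<close> in auto)
    qed (use \<open>h2 b \<le> c * b + d\<close> C(5) in \<open>auto simp: Ioo\<close>)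
  qed
qed

lemma Xset_component_meets_supp:
  fixes h1 h2 :: "real \<Rightarrow> real"
  assumes conv1: "convex_on {0<..} h1" and conv2: "convex_on {0<..} h2"
    and bdd1: "bounded (h1 ` {0<..})"
    and dec2: "\<forall>x\<in>{0<..}. \<forall>y\<in>{0<..}. x \<le> y \<longrightarrow> h2 y \<le> h2 x"
    and lim1: "(h1 \<longlongrightarrow> L) (at_right 0)" and lim2: "(h2 \<longlongrightarrow> L) (at_right 0)"
    and x: "x \<in> Xset h1 h2"
    and proper: "connected_component_set (Xset h1 h2) x \<noteq> {0<..}"
  shows "connected_component_set (Xset h1 h2) x \<inter> supp h1 \<noteq> {}"
proof
  define X where "X = Xset h1 h2"
  define C where "C = connected_component_set X x"
  assume "connected_component_set (Xset h1 h2) x \<inter> supp h1 = {}"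
  then have disj: "C \<inter> supp h1 = {}" by (simp add: C_def X_def)
  have cont1: "continuous_on {0<..} h1" and cont2: "continuous_on {0<..} h2"
    using convex_on_continuous[OF open_greaterThan] conv1 conv2 by auto
  have X: "open X" "X \<subseteq> {0<..}" "x \<in> X"
    using open_Xset[OF cont1 cont2] x by (auto simp: X_def Xset_def)
  have C: "open C" "connected C" "C \<subseteq> {0<..}" "x \<in> C"
    using X by (auto simp: C_def open_connected_component dest: connected_component_in)
  obtain c d where aff: "\<And>t. t \<in> C \<Longrightarrow> h1 t = c * t + d"
    using affine_fun_on_if_disjoint_supp[OF C(1-3) disj] by (auto simp: affine_fun_on_def)
  have "h2 x \<le> c * x + d"
  proof (rule convex_le_affine_on_interval[OF conv2 bdd1 dec2 lim1 lim2 C(1) _ C(3) _ C(4) aff])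
    show "is_interval C" using C(2) by (simp add: is_interval_connected_1)
    show "C \<noteq> {0<..}" using proper by (simp add: C_def X_def)
  next
    fix p assume p: "p \<in> frontier C" "p > 0"
    have "p \<notin> X"
      using frontier_of_connected_component_subset[of X x] p(1) X(1)
      by (auto simp: C_def frontier_def interior_open)
    then have "h2 p \<le> h1 p" using p(2) by (auto simp: X_def Xset_def)
    also have "h1 p = c * p + d"
    proof (rule isCont_eq_at_islimpt[OF _ _ _ aff])
      show "isCont h1 p" using cont1 p(2) by (simp add: continuous_on_eq_continuous_at)
      show "p islimpt C" using p(1) C(1) by (auto simp: frontier_def interior_open closure_def)
    qed (auto intro!: continuous_intros)
    finally show "h2 p \<le> c * p + d" .
  qed
  moreover have "h1 x < h2 x" using x by (simp add: Xset_def)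
  ultimately show False using aff[OF C(4)] by simp
qed

theorem proposition6p5:
  fixes h1 h2 :: "real \<Rightarrow> real"
  assumes conv1: "convex_on {0<..} h1" and conv2: "convex_on {0<..} h2"
    and bdd1: "bounded (h1 ` {0<..})" and bdd2: "bounded (h2 ` {0<..})"
    and dec1: "\<forall>x\<in>{0<..}. \<forall>y\<in>{0<..}. x \<le> y \<longrightarrow> h1 y \<le> h1 x"
    and dec2: "\<forall>x\<in>{0<..}. \<forall>y\<in>{0<..}. x \<le> y \<longrightarrow> h2 y \<le> h2 x"
    and lim: "\<exists>L. (h1 \<longlongrightarrow> L) (at_right 0) \<and> (h2 \<longlongrightarrow> L) (at_right 0)"
  shows "(\<forall>x\<in>Xset h1 h2. connected_component_set (Xset h1 h2) x \<noteq> {0<..} \<longrightarrow>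
            connected_component_set (Xset h1 h2) x \<inter> supp h1 \<noteq> {})
       \<and> (\<forall>x\<in>Xset h2 h1. connected_component_set (Xset h2 h1) x \<noteq> {0<..} \<longrightarrow>
            connected_component_set (Xset h2 h1) x \<inter> supp h2 \<noteq> {})"
proof -
  obtain L where L: "(h1 \<longlongrightarrow> L) (at_right 0)" "(h2 \<longlongrightarrow> L) (at_right 0)"
    using lim by blast
  show ?thesis
    using Xset_component_meets_supp[OF conv1 conv2 bdd1 dec2 L]
      Xset_component_meets_supp[OF conv2 conv1 bdd2 dec1 L(2,1)]
    by blast
qed

end
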